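(* Let $\mathcal{Z}$ be a data space with unknown distribution $\mu$, let $S=(Z_1,\dots,Z_n)$ have i.i.d. entries $Z_i\sim\mu$, let the learning algorithm be a Markov kernel $P_{W|S}$ producing a hypothesis $W$ in a hypothesis class $\mathcal{W}$, with $P_W$ the marginal of $W$ and $P_{W,Z_i}$ the joint law of $(W,Z_i)$. Let $l:\mathcal{W}\times\mathcal{Z}\to\mathbb{R}^+$ be a loss function and assume that for every $i=1,\dots,n$, $l(W,Z_i)$ is $\sigma$-subgaussian when $(W,Z_i)$ is distributed according to $\frac{P_{W,Z_i}+P_W\otimes\mu}{2}$. Then $$|\overline{\text{gen}}(P_{W|S},\mu)|\le 2\sigma\sqrt{2\log 2}.$$
   Context: A random variable $X$ is $\sigma$-subgaussian if $\mathbb{E}[e^{\lambda(X-\mathbb{E}X)}]\le e^{\lambda^2\sigma^2/2}$ for all $\lambda\in\mathbb{R}$. Expected generalization error: $\overline{\text{gen}}(P_{W|S},\mu)=\mathbb{E}_{P_{W,S}}\big[\int l(W,z)\,\mu(dz)-\frac1n\sum_{i=1}^n l(W,Z_i)\big]$. $\log$ is the natural logarithm. *)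

theory Defs
  imports "HOL-Probability.Probability"
begin

definition subgaussian :: "'a measure \<Rightarrow> ('a \<Rightarrow> real) \<Rightarrow> real \<Rightarrow> bool" where
  "subgaussian N X \<sigma> \<longleftrightarrow>
     integrable N X \<and>
     (\<forall>t::real. integrable N (\<lambda>x. exp (t * (X x - (\<integral>y. X y \<partial>N))))
        \<and> (\<integral>x. exp (t * (X x - (\<integral>y. X y \<partial>N))) \<partial>N) \<le> exp (t\<^sup>2 * \<sigma>\<^sup>2 / 2))"

definition mixture :: "'a measure \<Rightarrow> 'a measure \<Rightarrow> 'a measure" where
  "mixture N1 N2 = measure_pmf (bernoulli_pmf (1/2)) \<bind> (\<lambda>b. if b then N1 else N2)"

definition sample_dist :: "nat \<Rightarrow> 'z measure \<Rightarrow> (nat \<Rightarrow> 'z) measure" where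
  "sample_dist n \<mu> = PiM {..<n} (\<lambda>_. \<mu>)"

definition joint_WS :: "nat \<Rightarrow> 'z measure \<Rightarrow> 'w measure \<Rightarrow> ((nat \<Rightarrow> 'z) \<Rightarrow> 'w measure)
    \<Rightarrow> ('w \<times> (nat \<Rightarrow> 'z)) measure" where
  "joint_WS n \<mu> Wm K = sample_dist n \<mu> \<bind>
      (\<lambda>s. distr (K s) (Wm \<Otimes>\<^sub>M sample_dist n \<mu>) (\<lambda>w. (w, s)))"

definition marg_W :: "nat \<Rightarrow> 'z measure \<Rightarrow> 'w measure \<Rightarrow> ((nat \<Rightarrow> 'z) \<Rightarrow> 'w measure) \<Rightarrow> 'w measure" where
  "marg_W n \<mu> Wm K = distr (joint_WS n \<mu> Wm K) Wm fst"

definition joint_WZ :: "nat \<Rightarrow> 'z measure \<Rightarrow> 'w measure \<Rightarrow> ((nat \<Rightarrow> 'z) \<Rightarrow> 'w measure) \<Rightarrow> nat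
    \<Rightarrow> ('w \<times> 'z) measure" where
  "joint_WZ n \<mu> Wm K i = distr (joint_WS n \<mu> Wm K) (Wm \<Otimes>\<^sub>M \<mu>) (\<lambda>(w, s). (w, s i))"

definition gen_err :: "nat \<Rightarrow> 'z measure \<Rightarrow> 'w measure \<Rightarrow> ((nat \<Rightarrow> 'z) \<Rightarrow> 'w measure)
    \<Rightarrow> ('w \<Rightarrow> 'z \<Rightarrow> real) \<Rightarrow> real" where
  "gen_err n \<mu> Wm K l = (\<integral>(w, s). ((\<integral>z. l w z \<partial>\<mu>) - (1 / real n) * (\<Sum>i<n. l w (s i)))
      \<partial>joint_WS n \<mu> Wm K)"

end

theory Submission
  imports Defs
begin

text \<open>
  Fix \<open>i\<close>, let \<open>P\<close> be the law of \<open>(W, Z\<^sub>i)\<close>, \<open>R = P\<^sub>W \<otimes> \<mu>\<close> and \<open>Q = (P + R)/2\<close>; then both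
  \<open>P\<close> and \<open>R\<close> have density at most 2 with respect to \<open>Q\<close>. If a probability measure \<open>P\<close>
  satisfies \<open>P \<le> c Q\<close> and \<open>f\<close> is \<open>\<sigma>\<close>-subgaussian under \<open>Q\<close>, then by Jensen
  \<open>exp (t (E\<^sub>P f - E\<^sub>Q f)) \<le> E\<^sub>P exp (t (f - E\<^sub>Q f)) \<le> c exp (t\<^sup>2 \<sigma>\<^sup>2 / 2)\<close> for every \<open>t\<close>,
  and optimising over \<open>t\<close> gives \<open>|E\<^sub>P f - E\<^sub>Q f| \<le> \<sigma> sqrt (2 ln c)\<close>. With \<open>c = 2\<close> the
  means of the loss under \<open>P\<close> and \<open>R\<close> differ by at most \<open>2 \<sigma> sqrt (2 ln 2)\<close>, and the
  generalization error is the average of these differences over \<open>i\<close>.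
\<close>

lemma abs_le_of_linear_le_quadratic:
  fixes a s L :: real
  assumes "s \<ge> 0" and "L \<ge> 0" and bound: "\<And>t. t * a \<le> L + t\<^sup>2 * s\<^sup>2 / 2"
  shows "\<bar>a\<bar> \<le> s * sqrt (2 * L)"
proof (cases "s = 0")
  case True
  have "a = 0"
  proof (rule ccontr)
    assume "a \<noteq> 0"
    then show False using bound[of "(L + 1) / a"] True by simp
  qed
  then show ?thesis using assms by simp
next
  case False
  then have "s > 0" using assms by simp
  have "(a / s\<^sup>2) * a \<le> L + (a / s\<^sup>2)\<^sup>2 * s\<^sup>2 / 2" by (rule bound)
  then have "\<bar>a\<bar>\<^sup>2 \<le> (s * sqrt (2 * L))\<^sup>2"
    using \<open>s > 0\<close> \<open>L \<ge> 0\<close> by (simp add: field_simps power2_eq_square)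
  then show ?thesis
    by (rule power2_le_imp_le) (use \<open>s > 0\<close> \<open>L \<ge> 0\<close> in simp)
qed

lemma abs_diff_average_le:
  fixes x B :: real and n :: nat
  assumes "n > 0" and "\<And>i. i < n \<Longrightarrow> \<bar>x - y i\<bar> \<le> B"
  shows "\<bar>x - (\<Sum>i<n. y i) / n\<bar> \<le> B"
proof -
  have "x - (\<Sum>i<n. y i) / n = (\<Sum>i<n. x - y i) / n"
    using \<open>n > 0\<close> by (simp add: sum_subtractf field_simps)
  also have "\<bar>\<dots>\<bar> \<le> (\<Sum>i<n. \<bar>x - y i\<bar>) / n"
    by (simp add: divide_right_mono sum_abs)
  also have "\<dots> \<le> (\<Sum>i<n. B) / n"
    by (intro divide_right_mono sum_mono assms(2)) auto
  also have "\<dots> = B"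
    using \<open>n > 0\<close> by simp
  finally show ?thesis .
qed

definition bounded_density :: "real \<Rightarrow> 'a measure \<Rightarrow> 'a measure \<Rightarrow> bool" where
  "bounded_density c P Q \<longleftrightarrow> sets P = sets Q \<and>
     (\<forall>g \<in> borel_measurable Q. (\<integral>\<^sup>+x. g x \<partial>P) \<le> ennreal c * (\<integral>\<^sup>+x. g x \<partial>Q))"

lemma integrable_bounded_density:
  fixes h :: "_ \<Rightarrow> real"
  assumes dens: "bounded_density c P Q" and h: "integrable Q h"
  shows "integrable P h"
  unfolding integrable_iff_bounded
proof
  have "sets P = sets Q" using dens by (simp add: bounded_density_def)
  have "h \<in> borel_measurable Q" using h by (rule borel_measurable_integrable)
  then show "h \<in> borel_measurable P"
    by (subst measurable_cong_sets[OF \<open>sets P = sets Q\<close> refl])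
  from \<open>h \<in> borel_measurable Q\<close> have "(\<lambda>x. ennreal (norm (h x))) \<in> borel_measurable Q" by measurable
  then have "(\<integral>\<^sup>+x. norm (h x) \<partial>P) \<le> ennreal c * (\<integral>\<^sup>+x. norm (h x) \<partial>Q)"
    using dens by (simp add: bounded_density_def)
  also have "\<dots> < \<infinity>"
    using h by (simp add: integrable_iff_bounded ennreal_mult_less_top)
  finally show "(\<integral>\<^sup>+x. norm (h x) \<partial>P) < \<infinity>" .
qed

lemma integral_le_bounded_density:
  fixes h :: "_ \<Rightarrow> real"
  assumes dens: "bounded_density c P Q" and "c \<ge> 0"
    and h: "integrable Q h" and h_nonneg: "\<And>x. h x \<ge> 0"
  shows "(\<integral>x. h x \<partial>P) \<le> c * (\<integral>x. h x \<partial>Q)"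
proof -
  have "integrable P h" by (rule integrable_bounded_density[OF dens h])
  then have "ennreal (\<integral>x. h x \<partial>P) = (\<integral>\<^sup>+x. h x \<partial>P)"
    using h_nonneg by (simp add: nn_integral_eq_integral)
  also have "\<dots> \<le> ennreal c * (\<integral>\<^sup>+x. h x \<partial>Q)"
    using dens borel_measurable_integrable[OF h] by (simp add: bounded_density_def)
  also have "\<dots> = ennreal (c * (\<integral>x. h x \<partial>Q))"
    using h h_nonneg \<open>c \<ge> 0\<close> by (simp add: nn_integral_eq_integral ennreal_mult)
  finally show ?thesis
    using h h_nonneg \<open>c \<ge> 0\<close> by (simp add: ennreal_le_iff integral_nonneg_AE)
qed

lemma mean_deviation_le_of_bounded_density:
  assumes P: "prob_space P" and dens: "bounded_density c P Q" and "c \<ge> 1"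
    and sg: "subgaussian Q f \<sigma>" and "\<sigma> \<ge> 0"
  shows "\<bar>(\<integral>x. f x \<partial>P) - (\<integral>x. f x \<partial>Q)\<bar> \<le> \<sigma> * sqrt (2 * ln c)"
proof (rule abs_le_of_linear_le_quadratic)
  interpret P: prob_space P by (rule P)
  have "integrable Q f" using sg by (simp add: subgaussian_def)
  then have "integrable P f" by (rule integrable_bounded_density[OF dens])
  fix t
  define m where "m = (\<integral>x. f x \<partial>Q)"
  define g where "g x = t * (f x - m)" for x
  have "integrable P g"
    using \<open>integrable P f\<close> unfolding g_def by auto
  have exp_g: "integrable Q (\<lambda>x. exp (g x))" "(\<integral>x. exp (g x) \<partial>Q) \<le> exp (t\<^sup>2 * \<sigma>\<^sup>2 / 2)"
    using sg by (simp_all add: subgaussian_def g_def m_def)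
  have "exp (t * ((\<integral>x. f x \<partial>P) - m)) = exp (\<integral>x. g x \<partial>P)"
    using \<open>integrable P f\<close> unfolding g_def
    by (simp add: Bochner_Integration.integral_diff P.prob_space)
  also have "\<dots> \<le> (\<integral>x. exp (g x) \<partial>P)"
    using \<open>integrable P g\<close> integrable_bounded_density[OF dens exp_g(1)] exp_convex
    by (intro P.jensens_inequality[where I=UNIV]) auto
  also have "\<dots> \<le> c * (\<integral>x. exp (g x) \<partial>Q)"
    using \<open>c \<ge> 1\<close> by (intro integral_le_bounded_density[OF dens _ exp_g(1)]) auto
  also have "\<dots> \<le> c * exp (t\<^sup>2 * \<sigma>\<^sup>2 / 2)"
    using \<open>c \<ge> 1\<close> exp_g(2) by simp
  finally have "exp (t * ((\<integral>x. f x \<partial>P) - m)) \<le> exp (ln c + t\<^sup>2 * \<sigma>\<^sup>2 / 2)"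
    using \<open>c \<ge> 1\<close> by (simp add: exp_add)
  then show "t * ((\<integral>x. f x \<partial>P) - (\<integral>x. f x \<partial>Q)) \<le> ln c + t\<^sup>2 * \<sigma>\<^sup>2 / 2"
    by (simp add: m_def)
qed (use \<open>\<sigma> \<ge> 0\<close> \<open>c \<ge> 1\<close> in auto)

lemma sets_mixture:
  assumes "sets R = sets P"
  shows "sets (mixture P R) = sets P"
  unfolding mixture_def by (rule sets_bind) (use assms in auto)

lemma nn_integral_mixture:
  assumes P: "prob_space P" and R: "prob_space R" and sets_eq: "sets R = sets P"
    and g: "g \<in> borel_measurable P"
  shows "2 * (\<integral>\<^sup>+x. g x \<partial>mixture P R) = (\<integral>\<^sup>+x. g x \<partial>P) + (\<integral>\<^sup>+x. g x \<partial>R)"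
proof -
  have "(\<lambda>b. if b then P else R) \<in> measure_pmf (bernoulli_pmf (1/2)) \<rightarrow>\<^sub>M subprob_algebra P"
    using P R sets_eq by (auto simp: space_subprob_algebra prob_space_imp_subprob_space)
  then have "(\<integral>\<^sup>+x. g x \<partial>mixture P R) = (\<integral>\<^sup>+x. g x \<partial>P) / 2 + (\<integral>\<^sup>+x. g x \<partial>R) / 2"
    unfolding mixture_def using g by (simp add: nn_integral_bind divide_ennreal_def algebra_simps)
  moreover have "2 * (x / 2) = x" for x :: ennreal
    by (simp add: ennreal_times_divide mult.commute[of 2] mult_divide_eq_ennreal)
  ultimately show ?thesis
    by (simp add: distrib_left)
qed

lemma bounded_density_mixture:
  assumes P: "prob_space P" and R: "prob_space R" and sets_eq: "sets R = sets P"
  shows "bounded_density 2 P (mixture P R)" and "bounded_density 2 R (mixture P R)"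
proof -
  have sets_mix: "sets (mixture P R) = sets P" by (rule sets_mixture[OF sets_eq])
  have "(\<integral>\<^sup>+x. g x \<partial>P) \<le> 2 * (\<integral>\<^sup>+x. g x \<partial>mixture P R) \<and>
        (\<integral>\<^sup>+x. g x \<partial>R) \<le> 2 * (\<integral>\<^sup>+x. g x \<partial>mixture P R)"
    if "g \<in> borel_measurable (mixture P R)" for g
  proof -
    have "g \<in> borel_measurable P"
      using that by (subst (asm) measurable_cong_sets[OF sets_mix refl])
    then have "2 * (\<integral>\<^sup>+x. g x \<partial>mixture P R) = (\<integral>\<^sup>+x. g x \<partial>P) + (\<integral>\<^sup>+x. g x \<partial>R)"
      by (rule nn_integral_mixture[OF P R sets_eq])
    then show ?thesis
      by (metis add.commute le_iff_add)
  qed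
  then show "bounded_density 2 P (mixture P R)" "bounded_density 2 R (mixture P R)"
    using sets_mix sets_eq by (auto simp: bounded_density_def)
qed

lemma
  assumes P: "prob_space P" and R: "prob_space R" and sets_eq: "sets R = sets P"
    and sg: "subgaussian (mixture P R) f \<sigma>" and "\<sigma> \<ge> 0"
  shows mean_deviation_mixture:
      "\<bar>(\<integral>x. f x \<partial>R) - (\<integral>x. f x \<partial>P)\<bar> \<le> 2 * \<sigma> * sqrt (2 * ln 2)"
    and integrable_mixture_left: "integrable P f"
    and integrable_mixture_right: "integrable R f"
proof -
  note dens = bounded_density_mixture[OF P R sets_eq]
  have "\<bar>(\<integral>x. f x \<partial>P) - (\<integral>x. f x \<partial>mixture P R)\<bar> \<le> \<sigma> * sqrt (2 * ln 2)"
    by (rule mean_deviation_le_of_bounded_density[OF P dens(1) _ sg \<open>\<sigma> \<ge> 0\<close>]) simp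
  moreover have "\<bar>(\<integral>x. f x \<partial>R) - (\<integral>x. f x \<partial>mixture P R)\<bar> \<le> \<sigma> * sqrt (2 * ln 2)"
    by (rule mean_deviation_le_of_bounded_density[OF R dens(2) _ sg \<open>\<sigma> \<ge> 0\<close>]) simp
  ultimately show "\<bar>(\<integral>x. f x \<partial>R) - (\<integral>x. f x \<partial>P)\<bar> \<le> 2 * \<sigma> * sqrt (2 * ln 2)"
    by linarith
  have "integrable (mixture P R) f" using sg by (simp add: subgaussian_def)
  then show "integrable P f" "integrable R f"
    by (auto intro: integrable_bounded_density[OF dens(1)] integrable_bounded_density[OF dens(2)])
qed

lemma prob_space_sample_dist: "prob_space \<mu> \<Longrightarrow> prob_space (sample_dist n \<mu>)"
  unfolding sample_dist_def by (rule prob_space_PiM)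

lemma measurable_sample_component: "i < n \<Longrightarrow> (\<lambda>s. s i) \<in> sample_dist n \<mu> \<rightarrow>\<^sub>M \<mu>"
  unfolding sample_dist_def by (rule measurable_component_singleton) simp

context
  fixes \<mu> :: "'z measure" and Wm :: "'w measure" and K :: "(nat \<Rightarrow> 'z) \<Rightarrow> 'w measure"
    and n :: nat
  assumes \<mu>: "prob_space \<mu>" and K: "K \<in> sample_dist n \<mu> \<rightarrow>\<^sub>M prob_algebra Wm"
begin

lemma
  shows prob_space_joint_WS: "prob_space (joint_WS n \<mu> Wm K)"
    and sets_joint_WS: "sets (joint_WS n \<mu> Wm K) = sets (Wm \<Otimes>\<^sub>M sample_dist n \<mu>)"
proof -
  have S: "sample_dist n \<mu> \<in> space (prob_algebra (sample_dist n \<mu>))"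
    using prob_space_sample_dist[OF \<mu>] by (simp add: space_prob_algebra)
  have "(\<lambda>s. distr (K s) (Wm \<Otimes>\<^sub>M sample_dist n \<mu>) (\<lambda>w. (w, s)))
      \<in> sample_dist n \<mu> \<rightarrow>\<^sub>M prob_algebra (Wm \<Otimes>\<^sub>M sample_dist n \<mu>)"
    by (rule measurable_distr_prob_space2[OF K]) measurable
  then show "prob_space (joint_WS n \<mu> Wm K)"
    and "sets (joint_WS n \<mu> Wm K) = sets (Wm \<Otimes>\<^sub>M sample_dist n \<mu>)"
    unfolding joint_WS_def by (rule prob_space_bind'[OF S], rule sets_bind'[OF S])
qed

lemma measurable_fst_joint_WS: "fst \<in> joint_WS n \<mu> Wm K \<rightarrow>\<^sub>M Wm"
  by (subst measurable_cong_sets[OF sets_joint_WS refl]) measurable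

lemma measurable_joint_WS_component:
  assumes "i < n"
  shows "(\<lambda>(w, s). (w, s i)) \<in> joint_WS n \<mu> Wm K \<rightarrow>\<^sub>M Wm \<Otimes>\<^sub>M \<mu>"
proof -
  have "(\<lambda>(w, s). (w, s i)) \<in> Wm \<Otimes>\<^sub>M sample_dist n \<mu> \<rightarrow>\<^sub>M Wm \<Otimes>\<^sub>M \<mu>"
    using measurable_sample_component[OF \<open>i < n\<close>, of \<mu>]
    by (auto simp: case_prod_beta' intro!: measurable_Pair measurable_compose[OF measurable_snd])
  then show ?thesis
    by (subst measurable_cong_sets[OF sets_joint_WS refl])
qed

lemma prob_space_marg_W: "prob_space (marg_W n \<mu> Wm K)"
  unfolding marg_W_def
  by (rule prob_space.prob_space_distr[OF prob_space_joint_WS measurable_fst_joint_WS])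

lemma prob_space_joint_WZ: "i < n \<Longrightarrow> prob_space (joint_WZ n \<mu> Wm K i)"
  unfolding joint_WZ_def
  by (rule prob_space.prob_space_distr[OF prob_space_joint_WS measurable_joint_WS_component])

lemma
  assumes "i < n" and f: "(f :: _ \<Rightarrow> real) \<in> borel_measurable (Wm \<Otimes>\<^sub>M \<mu>)"
  shows integrable_joint_WZ_iff: "integrable (joint_WZ n \<mu> Wm K i) f \<longleftrightarrow>
      integrable (joint_WS n \<mu> Wm K) (\<lambda>(w, s). f (w, s i))"
    and integral_joint_WZ: "(\<integral>x. f x \<partial>joint_WZ n \<mu> Wm K i) =
      (\<integral>(w, s). f (w, s i) \<partial>joint_WS n \<mu> Wm K)"
  using integrable_distr_eq[OF measurable_joint_WS_component[OF \<open>i < n\<close>] f]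
    integral_distr[OF measurable_joint_WS_component[OF \<open>i < n\<close>] f]
  by (simp_all add: joint_WZ_def case_prod_beta')

lemma
  assumes f: "integrable (marg_W n \<mu> Wm K \<Otimes>\<^sub>M \<mu>) (f :: _ \<Rightarrow> real)"
  shows integrable_joint_WS_marginal:
      "integrable (joint_WS n \<mu> Wm K) (\<lambda>(w, s). \<integral>z. f (w, z) \<partial>\<mu>)"
    and integral_joint_WS_marginal:
      "(\<integral>(w, s). (\<integral>z. f (w, z) \<partial>\<mu>) \<partial>joint_WS n \<mu> Wm K) =
       (\<integral>x. f x \<partial>(marg_W n \<mu> Wm K \<Otimes>\<^sub>M \<mu>))"
proof -
  interpret pair_prob_space "marg_W n \<mu> Wm K" \<mu>
    using prob_space_marg_W \<mu>
    by (simp add: pair_prob_space_def pair_sigma_finite_def prob_space_imp_sigma_finite)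
  define G where "G w = (\<integral>z. f (w, z) \<partial>\<mu>)" for w
  have G: "integrable (marg_W n \<mu> Wm K) G"
    "(\<integral>w. G w \<partial>marg_W n \<mu> Wm K) = (\<integral>x. f x \<partial>(marg_W n \<mu> Wm K \<Otimes>\<^sub>M \<mu>))"
    unfolding G_def using integrable_fst'[OF f] integral_fst'[OF f] by auto
  have "G \<in> borel_measurable (marg_W n \<mu> Wm K)"
    using G(1) by (rule borel_measurable_integrable)
  then have "G \<in> borel_measurable Wm"
    by (simp add: marg_W_def)
  note distr_fst = integrable_distr_eq[OF measurable_fst_joint_WS this]
    integral_distr[OF measurable_fst_joint_WS this]
  have "integrable (joint_WS n \<mu> Wm K) (\<lambda>x. G (fst x))"
    and "(\<integral>x. G (fst x) \<partial>joint_WS n \<mu> Wm K) = (\<integral>x. f x \<partial>(marg_W n \<mu> Wm K \<Otimes>\<^sub>M \<mu>))"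
    using G unfolding marg_W_def distr_fst by auto
  then show "integrable (joint_WS n \<mu> Wm K) (\<lambda>(w, s). \<integral>z. f (w, z) \<partial>\<mu>)"
    and "(\<integral>(w, s). (\<integral>z. f (w, z) \<partial>\<mu>) \<partial>joint_WS n \<mu> Wm K) =
         (\<integral>x. f x \<partial>(marg_W n \<mu> Wm K \<Otimes>\<^sub>M \<mu>))"
    by (simp_all add: G_def case_prod_beta')
qed

lemma gen_err_eq_mean_diff:
  assumes l: "(\<lambda>(w, z). l w z) \<in> borel_measurable (Wm \<Otimes>\<^sub>M \<mu>)"
    and int_marg: "integrable (marg_W n \<mu> Wm K \<Otimes>\<^sub>M \<mu>) (\<lambda>(w, z). l w z)"
    and int_joint: "\<And>i. i < n \<Longrightarrow> integrable (joint_WZ n \<mu> Wm K i) (\<lambda>(w, z). l w z)"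
  shows "gen_err n \<mu> Wm K l = (\<integral>(w, z). l w z \<partial>(marg_W n \<mu> Wm K \<Otimes>\<^sub>M \<mu>))
      - (\<Sum>i<n. \<integral>(w, z). l w z \<partial>joint_WZ n \<mu> Wm K i) / n"
proof -
  let ?J = "joint_WS n \<mu> Wm K"
  have int_sample: "integrable ?J (\<lambda>(w, s). l w (s i))" if "i < n" for i
    using int_joint[OF that] integrable_joint_WZ_iff[OF that l] by simp
  have "gen_err n \<mu> Wm K l =
      (\<integral>(w, s). (\<integral>z. l w z \<partial>\<mu>) \<partial>?J) - (\<integral>(w, s). (\<Sum>i<n. l w (s i)) / n \<partial>?J)"
    unfolding gen_err_def
    using integrable_joint_WS_marginal[OF int_marg] int_sample
    by (subst Bochner_Integration.integral_diff[symmetric])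
      (auto simp: case_prod_beta' intro!: Bochner_Integration.integrable_sum)
  also have "(\<integral>(w, s). (\<Sum>i<n. l w (s i)) / n \<partial>?J) = (\<Sum>i<n. \<integral>(w, s). l w (s i) \<partial>?J) / n"
    using int_sample by (simp add: case_prod_beta' Bochner_Integration.integral_sum)
  finally show ?thesis
    using integral_joint_WS_marginal[OF int_marg] integral_joint_WZ[OF _ l] by simp
qed

end

theorem proposition1:
  fixes \<mu> :: "'z measure" and Wm :: "'w measure"
    and K :: "(nat \<Rightarrow> 'z) \<Rightarrow> 'w measure"
    and l :: "'w \<Rightarrow> 'z \<Rightarrow> real" and n :: nat and \<sigma> :: real
  assumes "prob_space \<mu>"
    and "n > 0"
    and "K \<in> sample_dist n \<mu> \<rightarrow>\<^sub>M prob_algebra Wm"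
    and "(\<lambda>(w, z). l w z) \<in> borel_measurable (Wm \<Otimes>\<^sub>M \<mu>)"
    and "\<And>w z. w \<in> space Wm \<Longrightarrow> z \<in> space \<mu> \<Longrightarrow> l w z \<ge> 0"
    and "\<sigma> \<ge> 0"
    and "\<And>i. i < n \<Longrightarrow>
          subgaussian (mixture (joint_WZ n \<mu> Wm K i) (marg_W n \<mu> Wm K \<Otimes>\<^sub>M \<mu>))
                      (\<lambda>(w, z). l w z) \<sigma>"
  shows "\<bar>gen_err n \<mu> Wm K l\<bar> \<le> 2 * \<sigma> * sqrt (2 * ln 2)"
proof -
  note \<mu> = assms(1) and K = assms(3) and l = assms(4) and sg = assms(7)
  let ?R = "marg_W n \<mu> Wm K \<Otimes>\<^sub>M \<mu>" and ?P = "joint_WZ n \<mu> Wm K" and ?L = "\<lambda>(w, z). l w z"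
  have R: "prob_space ?R"
    using prob_space_marg_W[OF \<mu> K] \<mu> by (simp add: prob_space_pair)
  have mixture_bounds: "\<bar>(\<integral>x. ?L x \<partial>?R) - (\<integral>x. ?L x \<partial>?P i)\<bar> \<le> 2 * \<sigma> * sqrt (2 * ln 2)"
    "integrable (?P i) ?L" "integrable ?R ?L" if "i < n" for i
  proof -
    have "sets ?R = sets (?P i)"
      by (simp add: marg_W_def joint_WZ_def cong: sets_pair_measure_cong)
    note mixture_assms = prob_space_joint_WZ[OF \<mu> K that] R this sg[OF that] \<open>\<sigma> \<ge> 0\<close>
    show "\<bar>(\<integral>x. ?L x \<partial>?R) - (\<integral>x. ?L x \<partial>?P i)\<bar> \<le> 2 * \<sigma> * sqrt (2 * ln 2)"
      "integrable (?P i) ?L" "integrable ?R ?L"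
      using mean_deviation_mixture[OF mixture_assms] integrable_mixture_left[OF mixture_assms]
        integrable_mixture_right[OF mixture_assms] by auto
  qed
  have "gen_err n \<mu> Wm K l = (\<integral>x. ?L x \<partial>?R) - (\<Sum>i<n. \<integral>x. ?L x \<partial>?P i) / n"
    using gen_err_eq_mean_diff[OF \<mu> K l] mixture_bounds(2,3) \<open>n > 0\<close> by auto
  then show ?thesis
    using abs_diff_average_le[OF \<open>n > 0\<close> mixture_bounds(1)] by simp
qed

end
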